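(* In the setting below, $$\sum_{\ell\in P^*}\bigl(|\Psi_+(\ell)|+|\Psi_{k+1}(\ell)|\bigr)=O(mr),$$ where the implied constant depends only on $\rho$, $c$ and $C$.
   Context: Let $P^*$ be a set of $m$ non-vertical lines in the plane, $\rho\ge 2$ and $c,C\ge1$ constants, $1\le r\le m$, and $k$ the integer with $\rho^{k-1}<r\le\rho^k$. Let $\Xi_0,\dots,\Xi_k,\Xi_{k+1}$ be a hierarchy of cuttings: $\Xi_0=\{\mathbb{R}^2\}$; for each $1\le i\le k+1$, $\Xi_i$ is a finite collection of closed triangles ("cells") with pairwise disjoint interiors covering the plane, each cell of $\Xi_i$ is contained in a unique cell of $\Xi_{i-1}$ (its parent; it is a child of the parent), and every cell of $\Xi_{i-1}$ is the union of its children. A line crosses a cell if it meets its interior. Moreover: for $1\le i\le k$, $|\Xi_i|\le C\rho^{2i}$, each cell of $\Xi_{i-1}$ has at most $c$ children in $\Xi_i$, and each cell of $\Xi_i$ is crossed by at most $m/\rho^i$ lines of $P^*$; and $|\Xi_{k+1}|\le Cr^2$. For $\ell\in P^*$: $\Psi(\ell)$ is the set of cells of $\Xi_0,\dots,\Xi_k$ crossed by $\ell$; $\Psi_{k+1}(\ell)$ is the set of cells of $\Xi_{k+1}$ crossed by $\ell$; $\Psi_+(\ell)$ is the set of cells that are children of some cell of $\Psi(\ell)$ and lie completely above $\ell$ (contained in the closed half-plane above $\ell$ and not crossed by $\ell$). *)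

theory Defs
  imports "HOL-Analysis.Analysis"
begin

type_synonym point = "real \<times> real"

text \<open>A non-vertical line is encoded by its slope and intercept: (a,b) is the line y = a x + b.\<close>
type_synonym nvline = "real \<times> real"

definition line_pts :: "nvline \<Rightarrow> point set" where
  "line_pts l = {p. snd p = fst l * fst p + snd l}"

definition closed_upper_halfplane :: "nvline \<Rightarrow> point set" where
  "closed_upper_halfplane l = {p. snd p \<ge> fst l * fst p + snd l}"

definition crosses :: "nvline \<Rightarrow> point set \<Rightarrow> bool" where
  "crosses l D \<longleftrightarrow> line_pts l \<inter> interior D \<noteq> {}"

definition above :: "nvline \<Rightarrow> point set \<Rightarrow> bool" where
  "above l D \<longleftrightarrow> D \<subseteq> closed_upper_halfplane l \<and> \<not> crosses l D"

definition closed_halfplane :: "point set \<Rightarrow> bool" where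
  "closed_halfplane H \<longleftrightarrow> (\<exists>u v w. (u, v) \<noteq> (0, 0) \<and> H = {p. u * fst p + v * snd p \<le> w})"

text \<open>A (possibly unbounded) closed triangle: intersection of at most three closed
  half-planes, with nonempty interior.\<close>
definition closed_triangle :: "point set \<Rightarrow> bool" where
  "closed_triangle D \<longleftrightarrow> (\<exists>H. finite H \<and> card H \<le> 3 \<and> (\<forall>h\<in>H. closed_halfplane h)
      \<and> D = \<Inter>H) \<and> interior D \<noteq> {}"

definition children :: "(nat \<Rightarrow> point set set) \<Rightarrow> nat \<Rightarrow> point set \<Rightarrow> point set set" where
  "children Xi i D = {D' \<in> Xi (Suc i). D' \<subseteq> D}"

definition cutting_hierarchy ::
  "real \<Rightarrow> real \<Rightarrow> real \<Rightarrow> nvline set \<Rightarrow> real \<Rightarrow> nat \<Rightarrow> (nat \<Rightarrow> point set set) \<Rightarrow> bool" where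
  "cutting_hierarchy rho c C P r k Xi \<longleftrightarrow>
     Xi 0 = {UNIV} \<and>
     (\<forall>i\<in>{1..k+1}.
        finite (Xi i) \<and> (\<forall>D\<in>Xi i. closed_triangle D) \<and>
        (\<forall>D\<in>Xi i. \<forall>D'\<in>Xi i. D \<noteq> D' \<longrightarrow> interior D \<inter> interior D' = {}) \<and>
        \<Union>(Xi i) = UNIV \<and>
        (\<forall>D\<in>Xi i. \<exists>!D'. D' \<in> Xi (i - 1) \<and> D \<subseteq> D') \<and>
        (\<forall>D'\<in>Xi (i - 1). D' = \<Union>(children Xi (i - 1) D'))) \<and>
     (\<forall>i\<in>{1..k}.
        real (card (Xi i)) \<le> C * rho ^ (2 * i) \<and>
        (\<forall>D\<in>Xi (i - 1). real (card (children Xi (i - 1) D)) \<le> c) \<and>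
        (\<forall>D\<in>Xi i. real (card {l\<in>P. crosses l D}) \<le> real (card P) / rho ^ i)) \<and>
     real (card (Xi (k + 1))) \<le> C * r ^ 2"

text \<open>Cells are tagged with their level to distinguish levels.\<close>
definition Psi :: "(nat \<Rightarrow> point set set) \<Rightarrow> nat \<Rightarrow> nvline \<Rightarrow> (nat \<times> point set) set" where
  "Psi Xi k l = {(i, D). i \<le> k \<and> D \<in> Xi i \<and> crosses l D}"

definition Psi_k1 :: "(nat \<Rightarrow> point set set) \<Rightarrow> nat \<Rightarrow> nvline \<Rightarrow> point set set" where
  "Psi_k1 Xi k l = {D \<in> Xi (k + 1). crosses l D}"

definition Psi_plus :: "(nat \<Rightarrow> point set set) \<Rightarrow> nat \<Rightarrow> nvline \<Rightarrow> (nat \<times> point set) set" where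
  "Psi_plus Xi k l = {(j, D'). \<exists>i D. (i, D) \<in> Psi Xi k l \<and> j = Suc i \<and>
        D' \<in> children Xi i D \<and> above l D'}"

end

theory Submission
  imports Defs
begin

text \<open>A line crossing a cell of level i also crosses its parent.  Hence every cell of
  \<open>\<Psi>\<^sub>+(\<ell>)\<close> and of \<open>\<Psi>\<^sub>k\<^sub>+\<^sub>1(\<ell>)\<close> is a child of a crossed cell of level \<open>i \<le> k\<close>, and charging it
  to that cell bounds the total by counting, level by level, the incidences between lines
  and cells.  At level \<open>i < k\<close> there are \<open>O(\<rho>\<^sup>2\<^sup>i)\<close> cells, each crossed by at most
  \<open>m/\<rho>\<^sup>i\<close> lines and having at most c children, which gives \<open>O(m\<rho>\<^sup>i)\<close>; these form a
  geometric series of total \<open>O(m\<rho>\<^sup>k\<^sup>-\<^sup>1) = O(mr)\<close>.  At the last level the \<open>O(r\<^sup>2)\<close> cells of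
  \<open>\<Xi>\<^sub>k\<^sub>+\<^sub>1\<close> each have a parent crossed by at most \<open>m/\<rho>\<^sup>k \<le> m/r\<close> lines, giving \<open>O(mr)\<close> again.\<close>

lemma card_filter_eq_sum:
  "finite X \<Longrightarrow> card {x\<in>X. Q x} = (\<Sum>x\<in>X. if Q x then 1 else 0)"
  using sum.inter_filter[of X "\<lambda>_. 1::nat" Q] by simp

lemma sum_card_filter_swap:
  assumes "finite P" "finite X"
  shows "(\<Sum>l\<in>P. card {D\<in>X. Q l D}) = (\<Sum>D\<in>X. card {l\<in>P. Q l D})"
proof -
  have "(\<Sum>l\<in>P. card {D\<in>X. Q l D}) = (\<Sum>l\<in>P. \<Sum>D\<in>X. if Q l D then 1 else 0)"
    using assms(2) by (simp add: card_filter_eq_sum)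
  also have "\<dots> = (\<Sum>D\<in>X. \<Sum>l\<in>P. if Q l D then 1 else 0)"
    by (rule sum.swap)
  also have "\<dots> = (\<Sum>D\<in>X. card {l\<in>P. Q l D})"
    using assms(1) by (simp add: card_filter_eq_sum)
  finally show ?thesis .
qed

lemma sum_card_filter_le:
  assumes "finite P" "finite X" "\<And>D. D \<in> X \<Longrightarrow> real (card {l\<in>P. Q l D}) \<le> b"
  shows "(\<Sum>l\<in>P. real (card {D\<in>X. Q l D})) \<le> real (card X) * b"
proof -
  have "(\<Sum>l\<in>P. real (card {D\<in>X. Q l D})) = (\<Sum>D\<in>X. real (card {l\<in>P. Q l D}))"
    unfolding of_nat_sum[symmetric] sum_card_filter_swap[OF assms(1,2)] ..
  also have "\<dots> \<le> (\<Sum>D\<in>X. b)"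
    by (rule sum_mono) (rule assms(3))
  finally show ?thesis by simp
qed

lemma geometric_sum_le_twice_last:
  fixes rho :: real
  assumes "2 \<le> rho"
  shows "(\<Sum>i<k. rho ^ i) \<le> 2 * rho ^ k / rho"
proof -
  have "0 < rho ^ k" using assms by simp
  have "(\<Sum>i<k. rho ^ i) = (rho ^ k - 1) / (rho - 1)"
    using assms by (simp add: geometric_sum)
  also have "\<dots> \<le> rho ^ k / (rho - 1)"
    using assms by (intro divide_right_mono) auto
  also have "\<dots> \<le> 2 * rho ^ k / rho"
    using assms \<open>0 < rho ^ k\<close> by (simp add: divide_simps)
  finally show ?thesis .
qed

lemma crosses_subset: "D' \<subseteq> D \<Longrightarrow> crosses l D' \<Longrightarrow> crosses l D"
  unfolding crosses_def using interior_mono by blast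

definition crossed_parent_cells :: "(nat \<Rightarrow> point set set) \<Rightarrow> nat \<Rightarrow> nvline \<Rightarrow> point set set" where
  "crossed_parent_cells Xi k l = {D'\<in>Xi (k + 1). \<exists>D\<in>Xi k. D' \<subseteq> D \<and> crosses l D}"

lemma Psi_plus_subset:
  "Psi_plus Xi k l \<subseteq> (\<Union>i<k. \<Union>D\<in>{D\<in>Xi i. crosses l D}. {Suc i} \<times> children Xi i D)
     \<union> {Suc k} \<times> crossed_parent_cells Xi k l"
proof
  fix x assume "x \<in> Psi_plus Xi k l"
  then obtain i D D' where x: "x = (Suc i, D')" and "i \<le> k" "D \<in> Xi i" "crosses l D"
    and "D' \<in> children Xi i D"
    unfolding Psi_plus_def Psi_def by auto
  then show "x \<in> (\<Union>i<k. \<Union>D\<in>{D\<in>Xi i. crosses l D}. {Suc i} \<times> children Xi i D)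
     \<union> {Suc k} \<times> crossed_parent_cells Xi k l"
    unfolding crossed_parent_cells_def children_def by (cases "i < k") auto
qed

lemma card_Psi_plus_le:
  assumes finite: "\<And>i. i \<le> k + 1 \<Longrightarrow> finite (Xi i)"
  shows "card (Psi_plus Xi k l)
    \<le> (\<Sum>i<k. \<Sum>D\<in>{D\<in>Xi i. crosses l D}. card (children Xi i D)) + card (crossed_parent_cells Xi k l)"
proof -
  let ?U = "\<Union>i<k. \<Union>D\<in>{D\<in>Xi i. crosses l D}. {Suc i} \<times> children Xi i D"
  have finite_children: "finite (children Xi i D)" if "i < k" for i D
    using finite[of "Suc i"] that unfolding children_def by simp
  have "finite ?U"
    using finite finite_children by (auto intro!: finite_UN_I)
  moreover have "finite (crossed_parent_cells Xi k l)"
    using finite[of "k + 1"] unfolding crossed_parent_cells_def by simp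
  ultimately have "card (Psi_plus Xi k l) \<le> card (?U \<union> {Suc k} \<times> crossed_parent_cells Xi k l)"
    by (intro card_mono[OF _ Psi_plus_subset]) simp
  also have "\<dots> \<le> card ?U + card (crossed_parent_cells Xi k l)"
    by (rule order_trans[OF card_Un_le]) (simp add: card_cartesian_product_singleton)
  also have "card ?U \<le> (\<Sum>i<k. card (\<Union>D\<in>{D\<in>Xi i. crosses l D}. {Suc i} \<times> children Xi i D))"
    by (rule card_UN_le) simp
  also have "\<dots> \<le> (\<Sum>i<k. \<Sum>D\<in>{D\<in>Xi i. crosses l D}. card ({Suc i} \<times> children Xi i D))"
    by (intro sum_mono card_UN_le) (simp add: finite)
  finally show ?thesis
    by (simp add: card_cartesian_product_singleton)
qed

lemma Psi_k1_subset:
  assumes "\<And>D'. D' \<in> Xi (k + 1) \<Longrightarrow> \<exists>D\<in>Xi k. D' \<subseteq> D"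
  shows "Psi_k1 Xi k l \<subseteq> crossed_parent_cells Xi k l"
  using assms crosses_subset unfolding Psi_k1_def crossed_parent_cells_def by blast

context
  fixes rho c C :: real and P :: "nvline set" and r :: real and k :: nat
    and Xi :: "nat \<Rightarrow> point set set"
  assumes hierarchy: "cutting_hierarchy rho c C P r k Xi"
begin

lemma cutting_hierarchy_refinement:
  assumes "i \<in> {1..k+1}"
  shows "finite (Xi i) \<and> (\<forall>D\<in>Xi i. closed_triangle D) \<and>
    (\<forall>D\<in>Xi i. \<forall>D'\<in>Xi i. D \<noteq> D' \<longrightarrow> interior D \<inter> interior D' = {}) \<and>
    \<Union>(Xi i) = UNIV \<and>
    (\<forall>D\<in>Xi i. \<exists>!D'. D' \<in> Xi (i - 1) \<and> D \<subseteq> D') \<and>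
    (\<forall>D'\<in>Xi (i - 1). D' = \<Union>(children Xi (i - 1) D'))"
  using hierarchy assms unfolding cutting_hierarchy_def by (elim conjE) (drule (1) bspec)

lemma cutting_hierarchy_bounds:
  assumes "i \<in> {1..k}"
  shows "real (card (Xi i)) \<le> C * rho ^ (2 * i) \<and>
    (\<forall>D\<in>Xi (i - 1). real (card (children Xi (i - 1) D)) \<le> c) \<and>
    (\<forall>D\<in>Xi i. real (card {l\<in>P. crosses l D}) \<le> real (card P) / rho ^ i)"
  using hierarchy assms unfolding cutting_hierarchy_def by (elim conjE) (drule (1) bspec)

lemma cutting_hierarchy_finite: "i \<le> k + 1 \<Longrightarrow> finite (Xi i)"
  using hierarchy cutting_hierarchy_refinement[of i] unfolding cutting_hierarchy_def
  by (cases "i = 0") auto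

lemma cutting_hierarchy_card_level:
  "1 \<le> C \<Longrightarrow> i \<le> k \<Longrightarrow> real (card (Xi i)) \<le> C * rho ^ (2 * i)"
  using hierarchy cutting_hierarchy_bounds[of i] unfolding cutting_hierarchy_def
  by (cases "i = 0") auto

lemma cutting_hierarchy_card_children:
  "i < k \<Longrightarrow> D \<in> Xi i \<Longrightarrow> real (card (children Xi i D)) \<le> c"
  using cutting_hierarchy_bounds[of "Suc i"] by simp

lemma cutting_hierarchy_card_crossing:
  assumes "finite P" "i \<le> k" "D \<in> Xi i"
  shows "real (card {l\<in>P. crosses l D}) \<le> real (card P) / rho ^ i"
proof (cases "i = 0")
  case True
  then show ?thesis using assms(1) by (simp add: card_mono)
next
  case False
  then show ?thesis using assms(2,3) cutting_hierarchy_bounds[of i] by simp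
qed

lemma cutting_hierarchy_unique_parent:
  "D' \<in> Xi (k + 1) \<Longrightarrow> \<exists>!D. D \<in> Xi k \<and> D' \<subseteq> D"
  using cutting_hierarchy_refinement[of "k + 1"] by simp

lemma cutting_hierarchy_card_last: "real (card (Xi (k + 1))) \<le> C * r ^ 2"
  using hierarchy unfolding cutting_hierarchy_def by blast

lemma card_Psi_le:
  "real (card (Psi_plus Xi k l) + card (Psi_k1 Xi k l))
    \<le> c * (\<Sum>i<k. real (card {D\<in>Xi i. crosses l D})) + 2 * real (card (crossed_parent_cells Xi k l))"
proof -
  have "Psi_k1 Xi k l \<subseteq> crossed_parent_cells Xi k l"
    using cutting_hierarchy_unique_parent by (intro Psi_k1_subset) blast
  then have "card (Psi_k1 Xi k l) \<le> card (crossed_parent_cells Xi k l)"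
    using cutting_hierarchy_finite[of "k + 1"] unfolding crossed_parent_cells_def
    by (intro card_mono) auto
  moreover have "real (\<Sum>i<k. \<Sum>D\<in>{D\<in>Xi i. crosses l D}. card (children Xi i D))
      \<le> (\<Sum>i<k. \<Sum>D\<in>{D\<in>Xi i. crosses l D}. c)"
    unfolding of_nat_sum by (intro sum_mono) (auto intro: cutting_hierarchy_card_children)
  moreover have "(\<Sum>i<k. \<Sum>D\<in>{D\<in>Xi i. crosses l D}. c) = c * (\<Sum>i<k. real (card {D\<in>Xi i. crosses l D}))"
    by (simp add: sum_distrib_left mult.commute)
  moreover have "card (Psi_plus Xi k l)
    \<le> (\<Sum>i<k. \<Sum>D\<in>{D\<in>Xi i. crosses l D}. card (children Xi i D)) + card (crossed_parent_cells Xi k l)"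
    using cutting_hierarchy_finite by (rule card_Psi_plus_le)
  ultimately show ?thesis by linarith
qed

lemma sum_card_crossed_cells_le:
  assumes "finite P" "1 \<le> C" "0 < rho" "i \<le> k"
  shows "(\<Sum>l\<in>P. real (card {D\<in>Xi i. crosses l D})) \<le> C * real (card P) * rho ^ i"
proof -
  have "(\<Sum>l\<in>P. real (card {D\<in>Xi i. crosses l D})) \<le> real (card (Xi i)) * (real (card P) / rho ^ i)"
    using assms cutting_hierarchy_finite cutting_hierarchy_card_crossing
    by (intro sum_card_filter_le) auto
  also have "\<dots> \<le> C * rho ^ (2 * i) * (real (card P) / rho ^ i)"
    using assms cutting_hierarchy_card_level by (intro mult_right_mono) auto
  also have "\<dots> = C * real (card P) * rho ^ i"
    using assms(3) by (simp add: mult_2 power_add)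
  finally show ?thesis .
qed

lemma sum_card_crossed_cells_below_le:
  assumes "finite P" "1 \<le> C" "2 \<le> rho" "rho ^ k / rho < r"
  shows "(\<Sum>i<k. \<Sum>l\<in>P. real (card {D\<in>Xi i. crosses l D})) \<le> 2 * C * real (card P) * r"
proof -
  have "(\<Sum>i<k. \<Sum>l\<in>P. real (card {D\<in>Xi i. crosses l D})) \<le> (\<Sum>i<k. C * real (card P) * rho ^ i)"
    using assms by (intro sum_mono sum_card_crossed_cells_le) auto
  also have "\<dots> = C * real (card P) * (\<Sum>i<k. rho ^ i)"
    by (simp add: sum_distrib_left)
  also have "\<dots> \<le> C * real (card P) * (2 * r)"
    using assms geometric_sum_le_twice_last[of rho k] by (intro mult_left_mono) auto
  finally show ?thesis by simp
qed

lemma sum_card_crossed_parent_cells_le: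
  assumes "finite P" "0 < r" "r \<le> rho ^ k"
  shows "(\<Sum>l\<in>P. real (card (crossed_parent_cells Xi k l))) \<le> C * real (card P) * r"
proof -
  have "real (card {l\<in>P. \<exists>D\<in>Xi k. D' \<subseteq> D \<and> crosses l D}) \<le> real (card P) / r"
    if D': "D' \<in> Xi (k + 1)" for D'
  proof -
    obtain D where D: "D \<in> Xi k" "D' \<subseteq> D" and unique: "\<And>E. E \<in> Xi k \<Longrightarrow> D' \<subseteq> E \<Longrightarrow> E = D"
      using cutting_hierarchy_unique_parent[OF D'] by blast
    have "{l\<in>P. \<exists>D\<in>Xi k. D' \<subseteq> D \<and> crosses l D} \<subseteq> {l\<in>P. crosses l D}"
      using unique by blast
    then have "real (card {l\<in>P. \<exists>D\<in>Xi k. D' \<subseteq> D \<and> crosses l D}) \<le> real (card {l\<in>P. crosses l D})"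
      using assms(1) by (simp add: card_mono)
    also have "\<dots> \<le> real (card P) / rho ^ k"
      using cutting_hierarchy_card_crossing[OF assms(1) order_refl D(1)] .
    also have "\<dots> \<le> real (card P) / r"
      using assms by (simp add: divide_left_mono)
    finally show ?thesis .
  qed
  then have "(\<Sum>l\<in>P. real (card (crossed_parent_cells Xi k l))) \<le> real (card (Xi (k + 1))) * (real (card P) / r)"
    unfolding crossed_parent_cells_def using assms(1) cutting_hierarchy_finite
    by (intro sum_card_filter_le) auto
  also have "\<dots> \<le> C * r ^ 2 * (real (card P) / r)"
    using assms(2) cutting_hierarchy_card_last by (intro mult_right_mono) auto
  also have "\<dots> = C * real (card P) * r"
    using assms(2) by (simp add: power2_eq_square)
  finally show ?thesis .
qed

end

theorem lemma5:
  fixes rho c C :: real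
  assumes "rho \<ge> 2" and "c \<ge> 1" and "C \<ge> 1"
  shows "\<exists>K::real. \<forall>(P::nvline set) (r::real) (k::nat) (Xi::nat \<Rightarrow> point set set).
           finite P \<and> 1 \<le> r \<and> r \<le> real (card P) \<and>
           rho ^ k / rho < r \<and> r \<le> rho ^ k \<and>
           cutting_hierarchy rho c C P r k Xi \<longrightarrow>
           real (\<Sum>l\<in>P. card (Psi_plus Xi k l) + card (Psi_k1 Xi k l))
             \<le> K * real (card P) * r"
proof (intro exI[of _ "2 * c * C + 2 * C"] allI impI, elim conjE)
  fix P :: "nvline set" and r :: real and k :: nat and Xi :: "nat \<Rightarrow> point set set"
  assume "finite P" "1 \<le> r" "rho ^ k / rho < r" "r \<le> rho ^ k"
    and hierarchy: "cutting_hierarchy rho c C P r k Xi"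
  let ?m = "real (card P)"
  have "real (\<Sum>l\<in>P. card (Psi_plus Xi k l) + card (Psi_k1 Xi k l))
      \<le> (\<Sum>l\<in>P. c * (\<Sum>i<k. real (card {D\<in>Xi i. crosses l D}))
                  + 2 * real (card (crossed_parent_cells Xi k l)))"
    unfolding of_nat_sum using hierarchy by (intro sum_mono card_Psi_le)
  also have "\<dots> = c * (\<Sum>i<k. \<Sum>l\<in>P. real (card {D\<in>Xi i. crosses l D}))
                  + 2 * (\<Sum>l\<in>P. real (card (crossed_parent_cells Xi k l)))"
    by (simp add: sum.distrib sum_distrib_left sum.swap[of _ _ P])
  also have "\<dots> \<le> c * (2 * C * ?m * r) + 2 * (C * ?m * r)"
    using assms \<open>finite P\<close> \<open>1 \<le> r\<close> \<open>rho ^ k / rho < r\<close> \<open>r \<le> rho ^ k\<close>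
      sum_card_crossed_cells_below_le[OF hierarchy] sum_card_crossed_parent_cells_le[OF hierarchy]
    by (intro add_mono mult_left_mono) auto
  finally show "real (\<Sum>l\<in>P. card (Psi_plus Xi k l) + card (Psi_k1 Xi k l)) \<le> (2 * c * C + 2 * C) * ?m * r"
    by (simp add: algebra_simps)
qed

end
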